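(* For every real matrix $T$ with $d$ columns and every integer $p\ge1$, $$\frac{1}{d^p}\|T\|_2^{2p}\le F_p(s^2(T))\le\frac1d\|T\|_{2p}^{2p}.$$ Moreover, for every finite subgroup $G\subset O(d)$ acting irreducibly on $\mathbb{R}^d$ and every $x\in\mathbb{R}^d$, $$\frac{1}{d^p}\|T\|_2^{2p}|x|^{2p}\le\frac{1}{|G|}\sum_{U\in G}|TUx|^{2p}\le\frac1d\|T\|_{2p}^{2p}|x|^{2p},$$ i.e. orbits of any irreducible group form (not necessarily tight) $p$-frames.
   Context: $s^2(T)$ is the multiset of eigenvalues of $T^\dagger T$; $F_p(s^2(T))=\int_{S^{d-1}}|T\theta|^{2p}d\sigma(\theta)$ with $\sigma$ the normalized uniform measure on the unit sphere; for groups $G\subset O(d)$ whose only invariant homogeneous polynomials of degree $2p$ are multiples of $|x|^{2p}$ this equals $\frac1{|G|}\sum_{U\in G}|TU\theta|^{2p}$ for every unit $\theta$. $\|T\|_n=(\sum_is_i^n)^{1/n}$ is the Schatten norm of $T$ ($s_i$ singular values). Irreducible: no subspace other than $\{0\},\mathbb{R}^d$ is invariant under all of $G$. *)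

theory Defs
  imports "HOL-Analysis.Analysis" "HOL-Computational_Algebra.Polynomial"
begin

text \<open>Normalized uniform (surface) measure on the unit sphere of real^'n, realised as
 the radial projection of the normalized Lebesgue measure on the unit ball
 (the cone-measure construction of the normalized surface measure).\<close>
definition sphere_measure :: "(real^'n) measure" where
  "sphere_measure = distr (uniform_measure lborel (ball 0 1)) borel (\<lambda>x. x /\<^sub>R norm x)"

definition charpoly :: "real^'n^'n \<Rightarrow> real poly" where
  "charpoly A = det (\<chi> i j. (if i = j then [:0, 1:] else 0) - [: A $ i $ j :])"

definition sq_sing_vals :: "real^'n^'m \<Rightarrow> real multiset" where
  "sq_sing_vals T = proots (charpoly (transpose T ** T))"

definition schatten_norm :: "real^'n^'m \<Rightarrow> nat \<Rightarrow> real" where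
  "schatten_norm T q = (\<Sum>\<^sub># (image_mset (\<lambda>l. sqrt l ^ q) (sq_sing_vals T))) powr (1 / real q)"

text \<open>F_p(s^2(T)) = integral over the sphere of |T theta|^(2p).\<close>
definition Fp :: "nat \<Rightarrow> real^'n^'m \<Rightarrow> real" where
  "Fp p T = integral\<^sup>L sphere_measure (\<lambda>\<theta>. norm (T *v \<theta>) ^ (2 * p))"

definition finite_orth_group :: "(real^'n^'n) set \<Rightarrow> bool" where
  "finite_orth_group G \<longleftrightarrow> finite G \<and> G \<subseteq> {U. orthogonal_matrix U} \<and> mat 1 \<in> G
     \<and> (\<forall>U\<in>G. \<forall>V\<in>G. U ** V \<in> G) \<and> (\<forall>U\<in>G. matrix_inv U \<in> G)"

definition acts_irreducibly :: "(real^'n^'n) set \<Rightarrow> bool" where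
  "acts_irreducibly G \<longleftrightarrow> (\<forall>W. subspace W \<and> (\<forall>U\<in>G. (\<lambda>x. U *v x) ` W \<subseteq> W)
       \<longrightarrow> W = {0} \<or> W = UNIV)"

end

theory Submission
  imports Defs "HOL-Probability.Probability_Measure"
begin

text \<open>
  Diagonalise \<open>T\<^sup>t T = \<Sum>\<^sub>k \<lambda>\<^sub>k u\<^sub>k u\<^sub>k\<^sup>t\<close>, so that \<open>|T\<theta>|\<^sup>2 = \<Sum>\<^sub>k \<lambda>\<^sub>k w\<^sub>k\<close> with weights
  \<open>w\<^sub>k = (u\<^sub>k \<bullet> \<theta>)\<^sup>2\<close> summing to \<open>|\<theta>|\<^sup>2\<close>. Both averages in the theorem are expectations over a
  probability measure on vectors of constant norm \<open>r\<close> that is isotropic,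
  \<open>E (w \<bullet> \<theta>)\<^sup>2 = |w|\<^sup>2 r\<^sup>2 / d\<close>: the sphere measure because it is invariant under signed coordinate
  permutations, the orbit of an irreducible group because by Schur's lemma the second-moment
  matrix of the orbit is a multiple of the identity. For an isotropic measure
  \<open>E |T\<theta>|\<^sup>2 = r\<^sup>2 \<Sum>\<lambda>\<^sub>k / d\<close>, so Jensen's inequality for \<open>t\<^sup>p\<close> gives the lower bound, while the
  power-mean inequality \<open>(\<Sum> \<lambda>\<^sub>k w\<^sub>k)\<^sup>p \<le> (\<Sum> w\<^sub>k)\<^bsup>p-1\<^esup> \<Sum> \<lambda>\<^sub>k\<^sup>p w\<^sub>k\<close>, integrated, gives the
  upper bound.
\<close>

section \<open>Spectral theorem and singular values\<close>

lemma symmetric_matrix_inner_commute: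
  fixes A :: "real^'n^'n"
  assumes "transpose A = A"
  shows "x \<bullet> (A *v y) = (A *v x) \<bullet> y"
  by (metis assms dot_lmul_matrix vector_transpose_matrix)

lemma quadratic_nonpos_imp_linear_coeff_zero:
  fixes b c :: real
  assumes "\<And>t. 2 * t * b + t\<^sup>2 * c \<le> 0"
  shows "b = 0"
proof (rule ccontr)
  assume "b \<noteq> 0"
  define s where "s = 1 / (\<bar>c\<bar> + 1)"
  have s: "s > 0" "s * \<bar>c\<bar> < 1" unfolding s_def by (auto simp: field_simps)
  have "b\<^sup>2 * (s * (2 + s * c)) \<le> 0"
    using assms[of "s * b"] by (simp add: power2_eq_square algebra_simps)
  moreover have "s * c \<ge> - (s * \<bar>c\<bar>)" using s by (simp add: abs_if mult_left_mono_neg)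
  hence "s * (2 + s * c) > 0" using s by (intro mult_pos_pos) auto
  ultimately show False using \<open>b \<noteq> 0\<close> by (metis mult_pos_pos not_less zero_less_power2)
qed

lemma rayleigh_maximiser_is_eigenvector:
  fixes A :: "real^'n^'n"
  assumes sym: "transpose A = A" and S: "subspace S" and inv: "\<And>x. x \<in> S \<Longrightarrow> A *v x \<in> S"
    and v: "v \<in> S" "v \<bullet> v = 1"
    and max: "\<And>y. y \<in> S \<Longrightarrow> y \<bullet> (A *v y) \<le> (v \<bullet> (A *v v)) * (y \<bullet> y)"
  shows "A *v v = (v \<bullet> (A *v v)) *\<^sub>R v"
proof -
  define l where "l = v \<bullet> (A *v v)"
  have perp: "w \<bullet> (A *v v) = 0" if w: "w \<in> S" "w \<bullet> v = 0" for w
  proof (rule quadratic_nonpos_imp_linear_coeff_zero[where c = "w \<bullet> (A *v w) - l * (w \<bullet> w)"])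
    fix t :: real
    have "v + t *\<^sub>R w \<in> S" using S v w by (simp add: subspace_add subspace_scale)
    from max[OF this]
    have "v \<bullet> (A *v v) + t * (v \<bullet> (A *v w)) + t * (w \<bullet> (A *v v)) + t * t * (w \<bullet> (A *v w))
        \<le> l * (v \<bullet> v + 2 * t * (w \<bullet> v) + t * t * (w \<bullet> w))"
      unfolding l_def
      by (simp add: matrix_vector_right_distrib matrix_vector_mult_scaleR inner_add_left
          inner_add_right inner_commute algebra_simps)
    moreover have "v \<bullet> (A *v w) = w \<bullet> (A *v v)"
      using symmetric_matrix_inner_commute[OF sym, of v w] by (simp add: inner_commute)
    ultimately show "2 * t * (w \<bullet> (A *v v)) + t\<^sup>2 * (w \<bullet> (A *v w) - l * (w \<bullet> w)) \<le> 0"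
      using v w unfolding l_def by (simp add: power2_eq_square algebra_simps)
  qed
  define z where "z = A *v v - l *\<^sub>R v"
  have "z \<in> S" unfolding z_def using inv v S by (simp add: subspace_diff subspace_scale)
  moreover have "z \<bullet> v = 0"
    unfolding z_def l_def using v by (simp add: inner_diff_left inner_commute[of "A *v v" v])
  ultimately have "z \<bullet> z = 0"
    using perp unfolding z_def by (simp add: inner_diff_right)
  thus ?thesis unfolding z_def l_def by simp
qed

lemma symmetric_eigenvector_in_invariant_subspace:
  fixes A :: "real^'n^'n"
  assumes sym: "transpose A = A" and S: "subspace S" "S \<noteq> {0}"
    and inv: "\<And>x. x \<in> S \<Longrightarrow> A *v x \<in> S"
  obtains v \<mu> where "v \<in> S" "norm v = 1" "A *v v = \<mu> *\<^sub>R v"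
proof -
  let ?K = "S \<inter> sphere 0 1"
  obtain w where w: "w \<in> S" "w \<noteq> 0" using S subspace_0 by blast
  have "w /\<^sub>R norm w \<in> ?K" using w S(1) by (simp add: subspace_scale)
  hence "?K \<noteq> {}" by blast
  moreover have "compact ?K" by (simp add: S(1) closed_subspace closed_Int_compact)
  moreover have "continuous_on ?K (\<lambda>x. x \<bullet> (A *v x))" by (intro continuous_intros)
  ultimately obtain v where v: "v \<in> ?K" and vmax: "\<forall>y\<in>?K. y \<bullet> (A *v y) \<le> v \<bullet> (A *v v)"
    using continuous_attains_sup by blast
  have "y \<bullet> (A *v y) \<le> (v \<bullet> (A *v v)) * (y \<bullet> y)" if "y \<in> S" for y
  proof (cases "y = 0")
    case False
    let ?z = "y /\<^sub>R norm y"
    have "?z \<in> ?K" using that False S(1) by (simp add: subspace_scale)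
    with vmax have "?z \<bullet> (A *v ?z) \<le> v \<bullet> (A *v v)" by blast
    moreover have "?z \<bullet> (A *v ?z) = (y \<bullet> (A *v y)) / (y \<bullet> y)"
      by (simp add: matrix_vector_mult_scaleR power2_norm_eq_inner[symmetric] power2_eq_square
          divide_inverse mult.commute)
    ultimately show ?thesis using False by (simp add: divide_le_eq mult.commute)
  qed simp
  from rayleigh_maximiser_is_eigenvector[OF sym S(1) inv _ _ this] v that
  show ?thesis by (auto simp: norm_eq_1)
qed

lemma symmetric_orthonormal_eigenbasis_subspace:
  fixes A :: "real^'n^'n"
  assumes sym: "transpose A = A"
  shows "subspace S \<Longrightarrow> (\<forall>x\<in>S. A *v x \<in> S) \<Longrightarrow>
    \<exists>B \<subseteq> S. pairwise orthogonal B \<and> (\<forall>b\<in>B. norm b = 1) \<and> (\<forall>b\<in>B. \<exists>\<mu>. A *v b = \<mu> *\<^sub>R b)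
      \<and> span B = S"
proof (induction "dim S" arbitrary: S rule: less_induct)
  case less
  show ?case
  proof (cases "S = {0}")
    case False
    obtain v \<mu> where v: "v \<in> S" "norm v = 1" "A *v v = \<mu> *\<^sub>R v"
      using symmetric_eigenvector_in_invariant_subspace[OF sym less.prems(1) False] less.prems(2)
      by metis
    have vv: "v \<bullet> v = 1" using v(2) by (simp add: norm_eq_1)
    define S' where "S' = S \<inter> {w. v \<bullet> w = 0}"
    have sS': "subspace S'"
      unfolding S'_def using less.prems(1) subspace_hyperplane[of v] by (rule subspace_inter)
    have iS': "\<forall>x\<in>S'. A *v x \<in> S'"
      using less.prems(2) v(3) symmetric_matrix_inner_commute[OF sym, of v] unfolding S'_def by auto
    have "S' \<subset> S" using v(1) vv unfolding S'_def by force
    hence "dim S' < dim S"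
      using dim_psubset[of S' S] span_eq_iff[of S] span_eq_iff[of S'] less.prems(1) sS' by metis
    from less.hyps[OF this sS' iS'] obtain B' where B': "B' \<subseteq> S'" "pairwise orthogonal B'"
      "\<forall>b\<in>B'. norm b = 1" "\<forall>b\<in>B'. \<exists>\<mu>. A *v b = \<mu> *\<^sub>R b" "span B' = S'" by blast
    have "S \<subseteq> span (insert v B')"
    proof
      fix x assume x: "x \<in> S"
      have "x - (v \<bullet> x) *\<^sub>R v \<in> S'" unfolding S'_def using x v(1) vv less.prems(1)
        by (auto simp: subspace_diff subspace_scale inner_diff_right)
      hence "x - (v \<bullet> x) *\<^sub>R v \<in> span (insert v B')"
        using B'(5) span_mono[of B' "insert v B'"] by auto
      moreover have "(v \<bullet> x) *\<^sub>R v \<in> span (insert v B')" by (simp add: span_base span_scale)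
      ultimately show "x \<in> span (insert v B')" using span_add by fastforce
    qed
    moreover have "span (insert v B') \<subseteq> S"
      using B'(1) v(1) less.prems(1) unfolding S'_def by (intro span_minimal) auto
    moreover have "pairwise orthogonal (insert v B')"
      using B'(1,2) unfolding S'_def by (intro pairwise_orthogonal_insert) (auto simp: orthogonal_def)
    ultimately show ?thesis
      using B'(1,3,4) v unfolding S'_def by (intro exI[of _ "insert v B'"]) auto
  qed (intro exI[of _ "{}"], auto)
qed

lemma symmetric_orthonormal_eigenbasis:
  fixes A :: "real^'n^'n"
  assumes sym: "transpose A = A"
  obtains u :: "'n \<Rightarrow> real^'n" and lam :: "'n \<Rightarrow> real"
  where "\<And>k. norm (u k) = 1" "\<And>k j. k \<noteq> j \<Longrightarrow> u k \<bullet> u j = 0"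
    "\<And>k. A *v u k = lam k *\<^sub>R u k" "\<And>y. (\<Sum>k\<in>UNIV. (y \<bullet> u k) *\<^sub>R u k) = y"
proof -
  obtain B where B: "pairwise orthogonal B" "\<forall>b\<in>B. norm b = 1"
      "\<forall>b\<in>B. \<exists>\<mu>. A *v b = \<mu> *\<^sub>R b" "span B = UNIV"
    using symmetric_orthonormal_eigenbasis_subspace[OF sym, of UNIV] by auto
  have "independent B" using B(1,2) by (intro pairwise_orthogonal_independent) force+
  hence "card B = CARD('n)" using dim_span_eq_card_independent B(4) by fastforce
  moreover have fin: "finite B" using B(1) by (rule pairwise_orthogonal_imp_finite)
  ultimately obtain g where g: "bij_betw g (UNIV :: 'n set) B"
    using finite_same_card_bij[of "UNIV :: 'n set" B] by auto
  hence gB: "g k \<in> B" for k by (auto simp: bij_betw_def)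
  show ?thesis
  proof
    show "norm (g k) = 1" for k using B(2) gB by auto
    show "g k \<bullet> g j = 0" if "k \<noteq> j" for k j
      using B(1) gB[of k] gB[of j] g that
      by (auto simp: pairwise_def orthogonal_def bij_betw_def inj_on_def)
    show "A *v g k = (SOME \<mu>. A *v g k = \<mu> *\<^sub>R g k) *\<^sub>R g k" for k
      using B(3) gB[of k] by (metis (mono_tags, lifting) someI_ex)
    show "(\<Sum>k\<in>UNIV. (y \<bullet> g k) *\<^sub>R g k) = y" for y
      using sum.reindex_bij_betw[OF g, of "\<lambda>b. (y \<bullet> b) *\<^sub>R b"]
        orthonormal_basis_expand[OF B(1) _ _ fin] B(2,4) by auto
  qed
qed

lemma charpoly_orthonormal_diagonalization:
  fixes A :: "real^'n^'n" and u :: "'n \<Rightarrow> real^'n" and lam :: "'n \<Rightarrow> real"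
  assumes A: "\<And>i j. A$i$j = (\<Sum>k\<in>UNIV. lam k * (u k $ i) * (u k $ j))"
    and orth: "\<And>i j. (\<Sum>k\<in>UNIV. u k $ i * u k $ j) = (if i = j then 1 else 0)"
  shows "proots (charpoly A) = image_mset lam (mset_set UNIV)"
proof -
  define P :: "real poly^'n^'n" where "P = (\<chi> i k. [:u k $ i:])"
  define D :: "real poly^'n^'n" where "D = (\<chi> k l. if k = l then [:- lam k, 1:] else 0)"
  have M: "(\<chi> i j. (if i = j then [:0,1:] else 0) - [:A$i$j:]) = P ** D ** transpose P"
  proof (simp only: vec_eq_iff, intro allI)
    fix i j
    have "(\<Sum>l\<in>UNIV. u l $ i * (x - lam l) * u l $ j)
        = x * (\<Sum>l\<in>UNIV. u l $ i * u l $ j) - (\<Sum>l\<in>UNIV. lam l * u l $ i * u l $ j)" for x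
      by (simp add: sum_distrib_left sum_subtractf[symmetric] algebra_simps)
    hence "(\<Sum>l\<in>UNIV. [:u l $ i:] * [:- lam l, 1:] * [:u l $ j:])
        = (if i = j then [:0,1:] else 0) - [:A$i$j:]"
      by (intro poly_eq_poly_eq_iff[THEN iffD1] ext) (simp add: poly_sum orth A algebra_simps)
    thus "(\<chi> i j. (if i = j then [:0,1:] else 0) - [:A$i$j:]) $ i $ j = (P ** D ** transpose P) $ i $ j"
      by (simp add: matrix_matrix_mult_def transpose_def P_def D_def if_distrib sum.delta
          cong: if_cong)
  qed
  have PP: "P ** transpose P = mat 1"
  proof (simp only: vec_eq_iff, intro allI)
    fix i j
    have "(\<Sum>l\<in>UNIV. [:u l $ i:] * [:u l $ j:]) = [:\<Sum>l\<in>UNIV. u l $ i * u l $ j:]"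
      by (intro poly_eq_poly_eq_iff[THEN iffD1] ext) (simp add: poly_sum mult_ac)
    thus "(P ** transpose P) $ i $ j = mat 1 $ i $ j"
      by (simp add: matrix_matrix_mult_def transpose_def P_def orth mat_def)
  qed
  have "charpoly A = det D * det (P ** transpose P)"
    unfolding charpoly_def M by (simp add: det_mul mult_ac)
  also have "\<dots> = (\<Prod>k\<in>UNIV. [:- lam k, 1:])" by (simp add: PP det_diagonal D_def)
  finally have "charpoly A = (\<Prod>k\<in>UNIV. [:- lam k, 1:])" .
  moreover have "image_mset lam (mset_set X) = (\<Sum>k\<in>X. {#lam k#})" for X
    by (induction X rule: infinite_finite_induct) auto
  ultimately show ?thesis by (simp add: proots_prod)
qed

lemma orthonormal_expansion_parseval:
  fixes u :: "'n \<Rightarrow> real^'n"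
  assumes "\<And>y. (\<Sum>k\<in>UNIV. (y \<bullet> u k) *\<^sub>R u k) = y"
  shows "(\<Sum>k\<in>UNIV. (u k \<bullet> y)\<^sup>2) = norm y ^ 2"
proof -
  have "norm y ^ 2 = y \<bullet> (\<Sum>k\<in>UNIV. (y \<bullet> u k) *\<^sub>R u k)" by (simp add: assms power2_norm_eq_inner)
  also have "\<dots> = (\<Sum>k\<in>UNIV. (u k \<bullet> y)\<^sup>2)"
    by (simp add: inner_sum_right power2_eq_square inner_commute)
  finally show ?thesis ..
qed

lemma gram_spectral_decomposition:
  fixes T :: "real^'n^'m"
  obtains u :: "'n \<Rightarrow> real^'n" and lam :: "'n \<Rightarrow> real"
  where "\<And>k. norm (u k) = 1" "\<And>y. (\<Sum>k\<in>UNIV. (u k \<bullet> y)\<^sup>2) = norm y ^ 2"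
    "\<And>k. lam k \<ge> 0"
    "sq_sing_vals T = image_mset lam (mset_set UNIV)"
    "\<And>y. norm (T *v y) ^ 2 = (\<Sum>k\<in>UNIV. lam k * (u k \<bullet> y)\<^sup>2)"
proof -
  define A where "A = transpose T ** T"
  have "transpose A = A" unfolding A_def by (simp add: matrix_transpose_mul)
  then obtain u :: "'n \<Rightarrow> real^'n" and lam :: "'n \<Rightarrow> real"
    where u1: "\<And>k. norm (u k) = 1" and eig: "\<And>k. A *v u k = lam k *\<^sub>R u k"
      and expand: "\<And>y. (\<Sum>k\<in>UNIV. (y \<bullet> u k) *\<^sub>R u k) = y"
    by (rule symmetric_orthonormal_eigenbasis) blast
  have quad: "y \<bullet> (A *v y) = norm (T *v y) ^ 2" for y
    unfolding A_def power2_norm_eq_inner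
    by (metis dot_lmul_matrix inner_commute matrix_vector_mul_assoc vector_transpose_matrix)
  have Ay: "A *v y = (\<Sum>k\<in>UNIV. (y \<bullet> u k) *\<^sub>R (lam k *\<^sub>R u k))" for y
    by (subst expand[symmetric, of y])
      (simp add: linear_sum[OF matrix_vector_mul_linear] matrix_vector_mult_scaleR eig)
  have "norm (T *v y) ^ 2 = (\<Sum>k\<in>UNIV. lam k * (u k \<bullet> y)\<^sup>2)" for y
    unfolding quad[symmetric] Ay
    by (simp add: inner_sum_right power2_eq_square inner_commute algebra_simps)
  moreover have "lam k \<ge> 0" for k
    using quad[of "u k"] u1[of k] by (simp add: eig norm_eq_1)
  moreover have "A$i$j = (\<Sum>k\<in>UNIV. lam k * (u k $ i) * (u k $ j))" for i j
    using Ay[of "axis j 1"]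
    by (simp add: matrix_vector_mult_basis column_def inner_axis' algebra_simps vec_eq_iff)
  moreover have "(\<Sum>k\<in>UNIV. u k $ i * u k $ j) = (if i = j then 1 else 0)" for i j
  proof -
    have "(\<Sum>k\<in>UNIV. u k $ i * u k $ j) = (\<Sum>k\<in>UNIV. (axis j 1 \<bullet> u k) *\<^sub>R u k) $ i"
      by (simp add: inner_axis' mult.commute)
    also have "\<dots> = axis j (1::real) $ i" by (simp only: expand)
    finally show ?thesis by (simp add: axis_def)
  qed
  ultimately show ?thesis
    using that u1 orthonormal_expansion_parseval[OF expand] charpoly_orthonormal_diagonalization
    unfolding sq_sing_vals_def A_def[symmetric] by blast
qed

lemma schatten_norm_powers:
  fixes T :: "real^'n^'m"
  assumes sv: "sq_sing_vals T = image_mset lam (mset_set UNIV)" and lam: "\<And>k. lam k \<ge> 0"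
    and p: "p \<ge> 1"
  shows "schatten_norm T 2 ^ (2 * p) = (\<Sum>k\<in>UNIV. lam k) ^ p"
    and "schatten_norm T (2 * p) ^ (2 * p) = (\<Sum>k\<in>UNIV. lam k ^ p)"
proof -
  have sn: "schatten_norm T (2 * q) = (\<Sum>k\<in>UNIV. lam k ^ q) powr (1 / real (2 * q))" for q
    unfolding schatten_norm_def sv
    by (simp add: multiset.map_comp sum_unfold_sum_mset comp_def power_mult lam)
  have nonneg: "(\<Sum>k\<in>UNIV. lam k ^ q) \<ge> 0" for q using lam by (simp add: sum_nonneg)
  have "schatten_norm T (2 * q) ^ (2 * q) = (\<Sum>k\<in>UNIV. lam k ^ q)" if "q \<ge> 1" for q
    unfolding sn using that nonneg[of q] root_powr_inverse[of "2 * q"] real_root_pow_pos2[of "2 * q"]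
    by simp
  from this[OF p] this[of 1] show "schatten_norm T (2 * p) ^ (2 * p) = (\<Sum>k\<in>UNIV. lam k ^ p)"
    and "schatten_norm T 2 ^ (2 * p) = (\<Sum>k\<in>UNIV. lam k) ^ p"
    by (simp_all add: power_mult)
qed

section \<open>Moment bounds for isotropic measures\<close>

lemma power_tangent_le:
  fixes a b :: real
  assumes "a \<ge> 0" "b \<ge> 0"
  shows "a ^ p + real p * a ^ (p - 1) * (b - a) \<le> b ^ p"
proof (cases p)
  case (Suc n)
  have sum_eq: "(\<Sum>i<Suc n. a ^ i * a ^ (n - i)) = real (Suc n) * a ^ n"
    by (simp add: power_add[symmetric])
  have "(b - a) * ((\<Sum>i<Suc n. b ^ i * a ^ (n - i)) - real (Suc n) * a ^ n) \<ge> 0"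
  proof (cases "a \<le> b")
    case True
    hence "(\<Sum>i<Suc n. a ^ i * a ^ (n - i)) \<le> (\<Sum>i<Suc n. b ^ i * a ^ (n - i))"
      using assms by (intro sum_mono mult_right_mono power_mono) auto
    thus ?thesis using True sum_eq by simp
  next
    case False
    hence "(\<Sum>i<Suc n. b ^ i * a ^ (n - i)) \<le> (\<Sum>i<Suc n. a ^ i * a ^ (n - i))"
      using assms by (intro sum_mono mult_right_mono power_mono) auto
    thus ?thesis using False sum_eq by (intro mult_nonpos_nonpos) auto
  qed
  thus ?thesis using diff_power_eq_sum[of b n a] Suc by (simp add: algebra_simps)
qed simp

lemma weighted_power_mean_le:
  fixes w x :: "'k \<Rightarrow> real"
  assumes "finite I" and w: "\<And>k. k \<in> I \<Longrightarrow> w k \<ge> 0" and x: "\<And>k. k \<in> I \<Longrightarrow> x k \<ge> 0"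
    and "p \<ge> 1"
  shows "(\<Sum>k\<in>I. x k * w k) ^ p \<le> (\<Sum>k\<in>I. w k) ^ (p - 1) * (\<Sum>k\<in>I. x k ^ p * w k)"
proof (cases "(\<Sum>k\<in>I. w k) = 0")
  case True
  hence "(\<Sum>k\<in>I. x k * w k) = 0"
    using sum_nonneg_eq_0_iff[OF assms(1)] w by (metis (no_types, lifting) mult_zero_right sum.neutral)
  thus ?thesis
    using True w x \<open>p \<ge> 1\<close> by (auto simp: power_0_left intro!: mult_nonneg_nonneg sum_nonneg)
next
  case False
  define W where "W = (\<Sum>k\<in>I. w k)"
  define m where "m = (\<Sum>k\<in>I. x k * w k) / W"
  have W: "W > 0" using False w unfolding W_def by (metis sum_nonneg order_le_less)
  have "m \<ge> 0" unfolding m_def using W w x by (simp add: sum_nonneg)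
  have Wm: "W * m = (\<Sum>k\<in>I. x k * w k)" unfolding m_def using W by simp
  have "(\<Sum>k\<in>I. w k * (m ^ p + real p * m ^ (p - 1) * (x k - m)))
      = W * m ^ p + real p * m ^ (p - 1) * ((\<Sum>k\<in>I. x k * w k) - W * m)"
    unfolding W_def
    by (simp add: algebra_simps sum.distrib sum_distrib_left sum_distrib_right sum_subtractf)
  hence "W * m ^ p = (\<Sum>k\<in>I. w k * (m ^ p + real p * m ^ (p - 1) * (x k - m)))"
    using Wm by simp
  also have "\<dots> \<le> (\<Sum>k\<in>I. x k ^ p * w k)"
    using power_tangent_le[OF \<open>m \<ge> 0\<close> x] w
    by (intro sum_mono) (simp add: mult.commute[of _ "w _"] mult_left_mono)
  finally have "W ^ (p - 1) * (W * m ^ p) \<le> W ^ (p - 1) * (\<Sum>k\<in>I. x k ^ p * w k)"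
    using W by (intro mult_left_mono) auto
  moreover have "W ^ (p - 1) * (W * m ^ p) = (W * m) ^ p"
    using \<open>p \<ge> 1\<close> by (simp add: power_mult_distrib power_eq_if[of W p] mult.assoc)
  ultimately show ?thesis unfolding W_def[symmetric] Wm by simp
qed

lemma (in prob_space) power_expectation_le:
  fixes f :: "'a \<Rightarrow> real"
  assumes "integrable M f" "integrable M (\<lambda>x. f x ^ p)" and "\<And>x. f x \<ge> 0"
  shows "expectation f ^ p \<le> expectation (\<lambda>x. f x ^ p)"
proof -
  let ?m = "expectation f"
  have "?m \<ge> 0" using assms(3) by simp
  have "(\<integral>x. ?m ^ p + real p * ?m ^ (p - 1) * (f x - ?m) \<partial>M) \<le> expectation (\<lambda>x. f x ^ p)"
    using assms power_tangent_le[OF \<open>?m \<ge> 0\<close>] by (intro integral_mono) auto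
  moreover have "(\<integral>x. ?m ^ p + real p * ?m ^ (p - 1) * (f x - ?m) \<partial>M) = ?m ^ p"
    using assms(1) by (simp add: prob_space)
  ultimately show ?thesis by simp
qed

lemma (in prob_space) isotropic_quadratic_form_moment_bounds:
  fixes X :: "'a \<Rightarrow> real^'n" and u :: "'n \<Rightarrow> real^'n" and lam :: "'n \<Rightarrow> real"
  assumes X[measurable]: "X \<in> borel_measurable M"
    and norm_X: "AE x in M. norm (X x) = r"
    and isotropic: "\<And>w. (\<integral>x. (w \<bullet> X x)\<^sup>2 \<partial>M) = norm w ^ 2 * r\<^sup>2 / CARD('n)"
    and u1: "\<And>k. norm (u k) = 1" and parseval: "\<And>y. (\<Sum>k\<in>UNIV. (u k \<bullet> y)\<^sup>2) = norm y ^ 2"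
    and lam: "\<And>k. lam k \<ge> 0" and p: "p \<ge> 1"
  shows "((\<Sum>k\<in>UNIV. lam k) / CARD('n) * r\<^sup>2) ^ p
           \<le> expectation (\<lambda>x. (\<Sum>k\<in>UNIV. lam k * (u k \<bullet> X x)\<^sup>2) ^ p)"
    and "expectation (\<lambda>x. (\<Sum>k\<in>UNIV. lam k * (u k \<bullet> X x)\<^sup>2) ^ p)
           \<le> (\<Sum>k\<in>UNIV. lam k ^ p) / CARD('n) * r ^ (2 * p)"
proof -
  define d where "d = real CARD('n)"
  define w where "w k x = (u k \<bullet> X x)\<^sup>2" for k x
  define f where "f x = (\<Sum>k\<in>UNIV. lam k * w k x)" for x
  have [measurable]: "w k \<in> borel_measurable M" "f \<in> borel_measurable M" for k
    unfolding f_def w_def by measurable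
  have sum_w: "AE x in M. (\<Sum>k\<in>UNIV. w k x) = r\<^sup>2"
    using norm_X by eventually_elim (simp add: w_def parseval)
  have w_le: "AE x in M. \<forall>k. w k x \<le> r\<^sup>2"
    using sum_w by eventually_elim (metis w_def member_le_sum finite zero_le_power2 UNIV_I)
  have int_w: "integrable M (w k)" for k
    using w_le by (intro integrable_const_bound[where B="r\<^sup>2"]) (auto simp: w_def elim!: eventually_mono)
  hence Ew: "expectation (w k) = r\<^sup>2 / d" for k unfolding w_def d_def by (simp add: isotropic u1)
  have f0: "f x \<ge> 0" for x unfolding f_def w_def using lam by (simp add: sum_nonneg)
  have "AE x in M. f x \<le> (\<Sum>k\<in>UNIV. lam k) * r\<^sup>2"
    using w_le unfolding f_def sum_distrib_right
    by eventually_elim (use lam in \<open>auto intro!: sum_mono mult_left_mono\<close>)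
  hence int_f: "integrable M (\<lambda>x. f x ^ q)" for q
    by (intro integrable_const_bound[where B="((\<Sum>k\<in>UNIV. lam k) * r\<^sup>2) ^ q"])
      (auto simp: f0 power_mono elim!: eventually_mono)
  have "expectation f = (\<Sum>k\<in>UNIV. lam k) / d * r\<^sup>2"
    using int_w unfolding f_def by (simp add: Ew sum_distrib_right sum_divide_distrib)
  thus "((\<Sum>k\<in>UNIV. lam k) / CARD('n) * r\<^sup>2) ^ p
          \<le> expectation (\<lambda>x. (\<Sum>k\<in>UNIV. lam k * (u k \<bullet> X x)\<^sup>2) ^ p)"
    using power_expectation_le[OF _ int_f[of p] f0] int_f[of 1] unfolding f_def w_def d_def by simp
  have "expectation (\<lambda>x. f x ^ p) \<le> expectation (\<lambda>x. (r\<^sup>2) ^ (p - 1) * (\<Sum>k\<in>UNIV. lam k ^ p * w k x))"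
  proof (rule integral_mono_AE)
    show "AE x in M. f x ^ p \<le> (r\<^sup>2) ^ (p - 1) * (\<Sum>k\<in>UNIV. lam k ^ p * w k x)"
      using sum_w
    proof eventually_elim
      case (elim x)
      show ?case
        using weighted_power_mean_le[of UNIV "\<lambda>k. w k x" lam p] elim lam p
        unfolding f_def w_def by simp
    qed
  qed (use int_f int_w in simp_all)
  also have "\<dots> = (r\<^sup>2) ^ (p - 1) * ((\<Sum>k\<in>UNIV. lam k ^ p) * (r\<^sup>2 / d))"
    using int_w by (simp add: Ew sum_distrib_right sum_divide_distrib)
  also have "\<dots> = (r\<^sup>2) ^ (p - 1) * r\<^sup>2 * (\<Sum>k\<in>UNIV. lam k ^ p) / d"
    by (simp add: divide_inverse ac_simps)
  also have "(r\<^sup>2) ^ (p - 1) * r\<^sup>2 = r ^ (2 * p)"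
    using p power_minus_mult[of p "r\<^sup>2"] by (simp add: power_mult)
  finally show "expectation (\<lambda>x. (\<Sum>k\<in>UNIV. lam k * (u k \<bullet> X x)\<^sup>2) ^ p)
      \<le> (\<Sum>k\<in>UNIV. lam k ^ p) / CARD('n) * r ^ (2 * p)"
    unfolding f_def w_def d_def by (simp add: ac_simps)
qed

lemma (in prob_space) isotropic_schatten_bounds:
  fixes X :: "'a \<Rightarrow> real^'n" and T :: "real^'n^'m"
  assumes X: "X \<in> borel_measurable M"
    and norm_X: "AE x in M. norm (X x) = r"
    and isotropic: "\<And>w. (\<integral>x. (w \<bullet> X x)\<^sup>2 \<partial>M) = norm w ^ 2 * r\<^sup>2 / CARD('n)"
    and p: "p \<ge> 1"
  shows "1 / real CARD('n) ^ p * schatten_norm T 2 ^ (2 * p) * r ^ (2 * p)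
           \<le> (\<integral>x. norm (T *v X x) ^ (2 * p) \<partial>M)"
    and "(\<integral>x. norm (T *v X x) ^ (2 * p) \<partial>M)
           \<le> 1 / real CARD('n) * schatten_norm T (2 * p) ^ (2 * p) * r ^ (2 * p)"
proof -
  obtain u :: "'n \<Rightarrow> real^'n" and lam :: "'n \<Rightarrow> real"
    where u1: "\<And>k. norm (u k) = 1" and parseval: "\<And>y. (\<Sum>k\<in>UNIV. (u k \<bullet> y)\<^sup>2) = norm y ^ 2"
      and lam: "\<And>k. lam k \<ge> 0" and sv: "sq_sing_vals T = image_mset lam (mset_set UNIV)"
      and T: "\<And>y. norm (T *v y) ^ 2 = (\<Sum>k\<in>UNIV. lam k * (u k \<bullet> y)\<^sup>2)"
    using gram_spectral_decomposition[of T] by blast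
  have "norm (T *v X x) ^ (2 * p) = (\<Sum>k\<in>UNIV. lam k * (u k \<bullet> X x)\<^sup>2) ^ p" for x
    unfolding power_mult T ..
  with isotropic_quadratic_form_moment_bounds[OF X norm_X isotropic u1 parseval lam p]
  show "1 / real CARD('n) ^ p * schatten_norm T 2 ^ (2 * p) * r ^ (2 * p)
          \<le> (\<integral>x. norm (T *v X x) ^ (2 * p) \<partial>M)"
    and "(\<integral>x. norm (T *v X x) ^ (2 * p) \<partial>M)
          \<le> 1 / real CARD('n) * schatten_norm T (2 * p) ^ (2 * p) * r ^ (2 * p)"
    unfolding schatten_norm_powers[OF sv lam p]
    by (simp_all add: power_divide power_mult_distrib power_mult)
qed

section \<open>Isotropy of the sphere measure\<close>

lemma norm_vec_power2: "norm x ^ 2 = (\<Sum>i\<in>UNIV. (x $ i)\<^sup>2)" for x :: "real^'n"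
  unfolding power2_norm_eq_inner by (simp add: inner_vec_def power2_eq_square)

definition signed_perm :: "('n \<Rightarrow> 'n) \<Rightarrow> ('n \<Rightarrow> real) \<Rightarrow> real^'n \<Rightarrow> real^'n" where
  "signed_perm \<pi> s x = (\<chi> k. s k * x $ \<pi> k)"

lemma signed_perm_measurable [measurable]: "signed_perm \<pi> s \<in> borel_measurable borel"
  unfolding signed_perm_def by (intro borel_measurable_continuous_onI continuous_intros)

lemma signed_perm_scaleR: "signed_perm \<pi> s (c *\<^sub>R x) = c *\<^sub>R signed_perm \<pi> s x"
  unfolding signed_perm_def by (simp add: vec_eq_iff)

lemma norm_signed_perm:
  assumes \<pi>: "bij \<pi>" and s: "\<And>k. \<bar>s k\<bar> = 1"
  shows "norm (signed_perm \<pi> s x) = norm x"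
proof -
  have "(s k)\<^sup>2 = 1" for k using s[of k] power2_abs[of "s k"] by simp
  hence "norm (signed_perm \<pi> s x) ^ 2 = (\<Sum>k\<in>UNIV. (x $ \<pi> k)\<^sup>2)"
    by (simp add: norm_vec_power2 signed_perm_def power_mult_distrib)
  also have "\<dots> = norm x ^ 2"
    using sum.reindex_bij_betw[OF \<pi>[unfolded bij_betw_def[symmetric]], of "\<lambda>k. (x $ k)\<^sup>2"]
    by (simp add: norm_vec_power2)
  finally show ?thesis by (simp add: power2_eq_iff_nonneg)
qed

lemma prod_Basis_vec: "(\<Prod>b\<in>Basis. x \<bullet> b) = (\<Prod>i\<in>UNIV. (x :: real^'n) $ i)"
proof -
  have "(Basis :: (real^'n) set) = range (\<lambda>i. axis i 1)" by (auto simp: Basis_vec_def)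
  hence "(\<Prod>b\<in>Basis. x \<bullet> b) = (\<Prod>b\<in>range (\<lambda>i. axis i 1). x \<bullet> b)" by simp
  also have "\<dots> = (\<Prod>i\<in>UNIV. x \<bullet> axis i 1)"
    by (rule prod.reindex_cong[of "\<lambda>i. axis i 1"]) (auto simp: inj_def axis_eq_axis)
  finally show ?thesis by (simp add: inner_axis)
qed

lemma lborel_signed_perm_invariant:
  assumes \<pi>: "bij \<pi>" and s: "\<And>k. \<bar>s k\<bar> = 1"
  shows "distr lborel borel (signed_perm \<pi> s) = (lborel :: (real^'n) measure)"
proof (rule lborel_eqI[symmetric])
  fix l u :: "real^'n"
  assume Basis_le: "\<And>b. b \<in> Basis \<Longrightarrow> l \<bullet> b \<le> u \<bullet> b"
  have lu: "l $ k \<le> u $ k" for k using Basis_le[of "axis k 1"] by (auto simp: Basis_vec_def inner_axis)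
  define \<rho> where "\<rho> = inv \<pi>"
  have \<pi>\<rho>: "\<pi> (\<rho> m) = m" and \<rho>\<pi>: "\<rho> (\<pi> k) = k" for m k
    unfolding \<rho>_def using \<pi> by (simp_all add: bij_is_surj surj_f_inv_f bij_is_inj inv_f_f)
  define a :: "real^'n" where "a = (\<chi> m. min (s (\<rho> m) * l $ \<rho> m) (s (\<rho> m) * u $ \<rho> m))"
  define c :: "real^'n" where "c = (\<chi> m. max (s (\<rho> m) * l $ \<rho> m) (s (\<rho> m) * u $ \<rho> m))"
  have interval: "l $ k < s k * y \<and> s k * y < u $ k \<longleftrightarrow>
      min (s k * l $ k) (s k * u $ k) < y \<and> y < max (s k * l $ k) (s k * u $ k)" for k y
    using s[of k] lu[of k] by (cases "s k \<ge> 0") (auto simp: abs_if)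
  have "signed_perm \<pi> s -` box l u = box a c"
  proof -
    have all_\<rho>: "(\<forall>k. Q k) \<longleftrightarrow> (\<forall>m. Q (\<rho> m))" for Q by (metis \<rho>\<pi>)
    have "x \<in> signed_perm \<pi> s -` box l u \<longleftrightarrow>
        (\<forall>m. l $ \<rho> m < s (\<rho> m) * x $ m \<and> s (\<rho> m) * x $ m < u $ \<rho> m)" for x
      using all_\<rho>[of "\<lambda>k. l $ k < s k * x $ \<pi> k \<and> s k * x $ \<pi> k < u $ k"]
      by (simp add: mem_box_cart signed_perm_def \<pi>\<rho>)
    thus ?thesis by (auto simp: mem_box_cart a_def c_def interval)
  qed
  moreover have "c $ m - a $ m = u $ \<rho> m - l $ \<rho> m" for m
    using s[of "\<rho> m"] lu[of "\<rho> m"] unfolding a_def c_def by (cases "s (\<rho> m) \<ge> 0") (auto simp: abs_if)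
  moreover have "\<forall>b\<in>Basis. a \<bullet> b \<le> c \<bullet> b"
    by (auto simp: Basis_vec_def inner_axis a_def c_def)
  ultimately have "emeasure (distr lborel borel (signed_perm \<pi> s)) (box l u)
      = ennreal (\<Prod>m\<in>UNIV. u $ \<rho> m - l $ \<rho> m)"
    by (simp add: emeasure_distr emeasure_lborel_box_eq prod_Basis_vec)
  also have "(\<Prod>m\<in>UNIV. u $ \<rho> m - l $ \<rho> m) = (\<Prod>k\<in>UNIV. u $ k - l $ k)"
    using prod.reindex_bij_betw[of \<rho> UNIV UNIV "\<lambda>k. u $ k - l $ k"] \<pi>
    unfolding \<rho>_def by (simp add: bij_imp_bij_inv bij_betw_def[symmetric])
  finally show "emeasure (distr lborel borel (signed_perm \<pi> s)) (box l u) = (\<Prod>b\<in>Basis. (u - l) \<bullet> b)"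
    by (simp add: prod_Basis_vec)
qed simp

lemma distr_uniform_measure_lborel_invariant:
  fixes F :: "'a::euclidean_space \<Rightarrow> 'a"
  assumes inv: "distr lborel borel F = lborel" and F[measurable]: "F \<in> borel_measurable borel"
    and S[measurable]: "S \<in> sets borel" and "F -` S = S"
  shows "distr (uniform_measure lborel S) borel F = uniform_measure lborel S"
proof (rule measure_eqI)
  fix X assume "X \<in> sets (distr (uniform_measure lborel S) borel F)"
  hence X[measurable]: "X \<in> sets borel" by simp
  have "emeasure lborel (F -` X \<inter> S) = emeasure (distr lborel borel F) (X \<inter> S)"
    using \<open>F -` S = S\<close> by (subst emeasure_distr) (auto simp: Int_commute vimage_Int)
  moreover have "F -` X \<in> sets borel" using measurable_sets[OF F X] by simp
  ultimately show "emeasure (distr (uniform_measure lborel S) borel F) X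
      = emeasure (uniform_measure lborel S) X"
    by (simp add: emeasure_distr inv Int_commute)
qed simp

lemma sets_sphere_measure [simp, measurable_cong]: "sets sphere_measure = sets borel"
  by (simp add: sphere_measure_def)

lemma prob_space_sphere_measure: "prob_space (sphere_measure :: (real^'n) measure)"
proof -
  have "unit_ball_vol (real CARD('n)) > 0" by simp
  hence "unit_ball_vol (real CARD('n)) \<noteq> 0" by linarith
  hence "emeasure lborel (ball (0 :: real^'n) 1) \<noteq> 0" "emeasure lborel (ball (0 :: real^'n) 1) \<noteq> \<infinity>"
    by (simp_all add: emeasure_ball)
  thus ?thesis
    unfolding sphere_measure_def by (intro prob_space.prob_space_distr prob_space_uniform_measure) auto
qed

lemma AE_sphere_measure_norm: "AE \<theta> in sphere_measure. norm (\<theta> :: real^'n) = 1"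
  unfolding sphere_measure_def
  by (subst AE_distr_iff; measurable?)
    (auto intro!: AE_uniform_measureI intro: AE_mp[OF AE_lborel_singleton[of 0]])

lemma sphere_measure_signed_perm_invariant:
  assumes \<pi>: "bij \<pi>" and s: "\<And>k. \<bar>s k\<bar> = 1"
  shows "distr sphere_measure borel (signed_perm \<pi> s) = (sphere_measure :: (real^'n) measure)"
proof -
  let ?U = "uniform_measure lborel (ball (0 :: real^'n) 1)"
  let ?F = "signed_perm \<pi> s" and ?N = "\<lambda>x :: real^'n. x /\<^sub>R norm x"
  have "distr ?U borel ?F = ?U"
    using norm_signed_perm[OF \<pi> s]
    by (intro distr_uniform_measure_lborel_invariant lborel_signed_perm_invariant[OF \<pi> s]) auto
  hence "sphere_measure = distr (distr ?U borel ?F) borel ?N" by (simp add: sphere_measure_def)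
  also have "\<dots> = distr ?U borel (?N \<circ> ?F)" by (simp add: distr_distr)
  also have "?N \<circ> ?F = ?F \<circ> ?N"
    by (simp add: fun_eq_iff signed_perm_scaleR norm_signed_perm[OF \<pi> s])
  also have "distr ?U borel (?F \<circ> ?N) = distr sphere_measure borel ?F"
    by (simp add: distr_distr sphere_measure_def)
  finally show ?thesis ..
qed

lemma integral_sphere_measure_signed_perm:
  fixes g :: "real^'n \<Rightarrow> real"
  assumes \<pi>: "bij \<pi>" and s: "\<And>k. \<bar>s k\<bar> = 1" and [measurable]: "g \<in> borel_measurable borel"
  shows "(\<integral>\<theta>. g (signed_perm \<pi> s \<theta>) \<partial>sphere_measure) = (\<integral>\<theta>. g \<theta> \<partial>sphere_measure)"
  using integral_distr[of "signed_perm \<pi> s" sphere_measure borel g]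
  by (simp add: sphere_measure_signed_perm_invariant[OF \<pi> s])

lemma integrable_sphere_measure_coordinate_product:
  "integrable sphere_measure (\<lambda>\<theta> :: real^'n. \<theta> $ i * \<theta> $ j)"
proof -
  interpret prob_space "sphere_measure :: (real^'n) measure" by (rule prob_space_sphere_measure)
  show ?thesis
  proof (rule integrable_const_bound[where B = 1])
    show "AE \<theta> in sphere_measure. norm (\<theta> $ i * \<theta> $ j) \<le> 1"
      using AE_sphere_measure_norm
    proof eventually_elim
      case (elim \<theta>)
      thus ?case
        using component_le_norm_cart[of \<theta> i] component_le_norm_cart[of \<theta> j]
        by (simp add: abs_mult mult_le_one)
    qed
  qed simp
qed

lemma sphere_measure_second_moments:
  fixes i j :: "'n::finite"
  shows "(\<integral>\<theta>. \<theta> $ i * \<theta> $ j \<partial>sphere_measure) = (if i = j then 1 / CARD('n) else (0 :: real))"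
proof -
  interpret prob_space "sphere_measure :: (real^'n) measure" by (rule prob_space_sphere_measure)
  define E where "E i j = (\<integral>\<theta>. \<theta> $ i * \<theta> $ j \<partial>(sphere_measure :: (real^'n) measure))" for i j
  have off_diagonal: "E i j = 0" if "i \<noteq> j" for i j
  proof -
    define s :: "'n \<Rightarrow> real" where "s k = (if k = i then -1 else 1)" for k
    have "E i j = (\<integral>\<theta>. (\<lambda>y. y $ i * y $ j) (signed_perm id s \<theta>) \<partial>sphere_measure)"
      unfolding E_def by (rule integral_sphere_measure_signed_perm[symmetric]) (auto simp: s_def)
    also have "\<dots> = - E i j" using that by (simp add: E_def signed_perm_def s_def)
    finally show ?thesis by simp
  qed
  have diagonal: "E i i = E j j" for i j
  proof -
    define \<pi> :: "'n \<Rightarrow> 'n" where "\<pi> = Transposition.transpose i j"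
    have "E i i = (\<integral>\<theta>. (\<lambda>y. y $ i * y $ i) (signed_perm \<pi> (\<lambda>_. 1) \<theta>) \<partial>sphere_measure)"
      unfolding E_def \<pi>_def by (rule integral_sphere_measure_signed_perm[symmetric]) auto
    also have "\<dots> = E j j" by (simp add: E_def signed_perm_def \<pi>_def)
    finally show ?thesis .
  qed
  have "(\<Sum>i\<in>UNIV. E i i) = (\<integral>\<theta>. norm (\<theta> :: real^'n) ^ 2 \<partial>sphere_measure)"
    unfolding E_def norm_vec_power2
    by (simp add: integrable_sphere_measure_coordinate_product power2_eq_square)
  also have "\<dots> = 1"
    using AE_sphere_measure_norm by (subst integral_cong_AE[where g = "\<lambda>_. 1"]) (auto simp: prob_space)
  finally have "real CARD('n) * E i i = 1"
    using diagonal[of _ i] by (simp add: sum.cong[of UNIV UNIV "\<lambda>k. E k k" "\<lambda>_. E i i"])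
  thus ?thesis using off_diagonal diagonal unfolding E_def by (auto simp: field_simps)
qed

lemma sphere_measure_isotropic:
  "(\<integral>\<theta>. (w \<bullet> \<theta>)\<^sup>2 \<partial>sphere_measure) = norm (w :: real^'n) ^ 2 / CARD('n)"
proof -
  have "(\<integral>\<theta>. (w \<bullet> \<theta>)\<^sup>2 \<partial>sphere_measure)
      = (\<integral>\<theta>. (\<Sum>i\<in>UNIV. \<Sum>j\<in>UNIV. (w $ i * w $ j) * (\<theta> $ i * \<theta> $ j)) \<partial>sphere_measure)"
    by (simp add: inner_vec_def power2_eq_square sum_product mult_ac)
  also have "\<dots> = (\<Sum>i\<in>UNIV. (w $ i)\<^sup>2 / CARD('n))"
    by (simp add: integrable_sphere_measure_coordinate_product sphere_measure_second_moments
        power2_eq_square if_distrib cong: if_cong)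
  also have "\<dots> = norm w ^ 2 / CARD('n)"
    by (simp add: norm_vec_power2 sum_divide_distrib)
  finally show ?thesis .
qed

section \<open>Isotropy of orbits of irreducible groups\<close>

lemma orthogonal_matrix_norm:
  fixes U :: "real^'n^'n"
  assumes "orthogonal_matrix U"
  shows "norm (U *v x) = norm x"
  using assms orthogonal_transformation_matrix[of "(*v) U"]
  by (simp add: orthogonal_transformation_norm matrix_of_matrix_vector_mul)

lemma finite_orth_group_translate_bij:
  assumes G: "finite_orth_group G" and V: "V \<in> G"
  shows "bij_betw (\<lambda>U. V ** U) G G"
proof -
  have "inj_on (\<lambda>U. V ** U) G"
    using G V unfolding finite_orth_group_def
    by (intro inj_onI) (metis matrix_mul_assoc matrix_mul_lid orthogonal_matrix_def subsetD mem_Collect_eq)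
  moreover have "(\<lambda>U. V ** U) ` G \<subseteq> G" using G V unfolding finite_orth_group_def by auto
  moreover have "finite G" using G unfolding finite_orth_group_def by blast
  ultimately show ?thesis by (simp add: bij_betw_def endo_inj_surj)
qed

text \<open>Schur's lemma: an eigenspace of \<open>M\<close> is \<open>G\<close>-invariant, hence everything.\<close>
lemma symmetric_commuting_irreducible_scalar:
  fixes M :: "real^'n^'n"
  assumes sym: "transpose M = M" and irr: "acts_irreducibly G"
    and comm: "\<And>U y. U \<in> G \<Longrightarrow> M *v (U *v y) = U *v (M *v y)"
  obtains \<mu> where "\<And>y. M *v y = \<mu> *\<^sub>R y"
proof -
  have "(UNIV :: (real^'n) set) \<noteq> {0}"
    using axis_eq_0_iff[of "undefined :: 'n" "1::real"] by force
  then obtain v \<mu> where v: "norm v = 1" "M *v v = \<mu> *\<^sub>R v"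
    using symmetric_eigenvector_in_invariant_subspace[OF sym subspace_UNIV] by blast
  define E where "E = {y. M *v y = \<mu> *\<^sub>R y}"
  have "subspace E" unfolding E_def subspace_def
    by (simp add: matrix_vector_right_distrib matrix_vector_mult_scaleR scaleR_add_right)
  moreover have "\<forall>U\<in>G. (\<lambda>y. U *v y) ` E \<subseteq> E"
    using comm unfolding E_def by (auto simp: matrix_vector_mult_scaleR)
  moreover have "v \<in> E" "v \<noteq> 0" using v unfolding E_def by auto
  ultimately have "E = UNIV" using irr unfolding acts_irreducibly_def by blast
  thus ?thesis using that unfolding E_def by blast
qed

lemma finite_orth_group_orbit_isotropic:
  fixes G :: "(real^'n^'n) set" and x w :: "real^'n"
  assumes G: "finite_orth_group G" and irr: "acts_irreducibly G"
  shows "(\<Sum>U\<in>G. (w \<bullet> (U *v x))\<^sup>2) = real (card G) * norm x ^ 2 * norm w ^ 2 / CARD('n)"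
proof -
  have orth: "\<And>U. U \<in> G \<Longrightarrow> orthogonal_matrix U" using G unfolding finite_orth_group_def by auto
  define M :: "real^'n^'n" where "M = (\<chi> i j. \<Sum>U\<in>G. (U *v x) $ i * (U *v x) $ j)"
  have M: "M *v y = (\<Sum>U\<in>G. (y \<bullet> (U *v x)) *\<^sub>R (U *v x))" for y
    by (simp add: vec_eq_iff M_def matrix_vector_mult_def inner_vec_def sum_distrib_left
        sum_distrib_right mult_ac sum.swap[of _ UNIV G])
  have quad: "y \<bullet> (M *v y) = (\<Sum>U\<in>G. (y \<bullet> (U *v x))\<^sup>2)" for y
    by (simp add: M inner_sum_right power2_eq_square)
  have "M *v (V *v y) = V *v (M *v y)" if V: "V \<in> G" for V y
  proof -
    have "transpose V ** V = mat 1" using orth[OF V] by (simp add: orthogonal_matrix_def)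
    hence inner_V: "(V *v y) \<bullet> (V *v z) = y \<bullet> z" for z
      by (metis dot_lmul_matrix matrix_vector_mul_assoc matrix_vector_mul_lid vector_transpose_matrix
          inner_commute)
    have "M *v (V *v y) = (\<Sum>U\<in>G. ((V *v y) \<bullet> ((V ** U) *v x)) *\<^sub>R ((V ** U) *v x))"
      unfolding M by (rule sum.reindex_bij_betw[OF finite_orth_group_translate_bij[OF G V], symmetric])
    also have "\<dots> = V *v (M *v y)"
      by (simp add: M inner_V matrix_vector_mul_assoc[symmetric] linear_sum[OF matrix_vector_mul_linear]
          matrix_vector_mult_scaleR)
    finally show ?thesis .
  qed
  moreover have "transpose M = M" by (simp add: M_def transpose_def vec_eq_iff mult.commute)
  ultimately obtain \<mu> where \<mu>: "\<And>y. M *v y = \<mu> *\<^sub>R y"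
    using symmetric_commuting_irreducible_scalar[OF _ irr] by metis
  have "real CARD('n) * \<mu> = (\<Sum>i\<in>UNIV. axis i 1 \<bullet> (M *v axis i 1))"
    by (simp add: \<mu> inner_axis_axis)
  also have "\<dots> = (\<Sum>U\<in>G. norm (U *v x) ^ 2)"
    by (simp add: quad inner_axis' norm_vec_power2 sum.swap[of _ UNIV G])
  also have "\<dots> = real (card G) * norm x ^ 2" by (simp add: orthogonal_matrix_norm orth)
  finally have "real CARD('n) * \<mu> = real (card G) * norm x ^ 2" .
  moreover have "(\<Sum>U\<in>G. (w \<bullet> (U *v x))\<^sup>2) = \<mu> * norm w ^ 2"
    by (simp add: quad[symmetric] \<mu> power2_norm_eq_inner)
  ultimately show ?thesis by (simp add: field_simps)
qed

lemma uniform_count_measure_orbit_isotropic: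
  fixes G :: "(real^'n^'n) set" and x :: "real^'n"
  assumes G: "finite_orth_group G" and irr: "acts_irreducibly G"
  shows "(\<integral>U. (w \<bullet> (U *v x))\<^sup>2 \<partial>uniform_count_measure G) = norm w ^ 2 * norm x ^ 2 / CARD('n)"
proof -
  have "finite G" "G \<noteq> {}" using G unfolding finite_orth_group_def by auto
  thus ?thesis
    by (simp add: integral_uniform_count_measure finite_orth_group_orbit_isotropic[OF G irr])
qed

theorem corollary5p2:
  fixes T :: "real^'n^'m" and p :: nat
  assumes "p \<ge> 1"
  shows "(1 / real CARD('n) ^ p) * schatten_norm T 2 ^ (2 * p) \<le> Fp p T
         \<and> Fp p T \<le> (1 / real CARD('n)) * schatten_norm T (2 * p) ^ (2 * p)
         \<and> (\<forall>G (x :: real^'n). finite_orth_group G \<and> acts_irreducibly G \<longrightarrow>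
              (1 / real CARD('n) ^ p) * schatten_norm T 2 ^ (2 * p) * norm x ^ (2 * p)
                \<le> (1 / real (card G)) * (\<Sum>U\<in>G. norm (T *v (U *v x)) ^ (2 * p))
              \<and> (1 / real (card G)) * (\<Sum>U\<in>G. norm (T *v (U *v x)) ^ (2 * p))
                \<le> (1 / real CARD('n)) * schatten_norm T (2 * p) ^ (2 * p) * norm x ^ (2 * p))"
proof (intro conjI allI impI; (elim conjE)?)
  note sphere = prob_space.isotropic_schatten_bounds[OF prob_space_sphere_measure,
      of "\<lambda>\<theta>. \<theta>" 1 p T, OF _ AE_sphere_measure_norm _ assms]
  show "(1 / real CARD('n) ^ p) * schatten_norm T 2 ^ (2 * p) \<le> Fp p T"
    and "Fp p T \<le> (1 / real CARD('n)) * schatten_norm T (2 * p) ^ (2 * p)"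
    using sphere by (simp_all add: Fp_def sphere_measure_isotropic)
next
  fix G :: "(real^'n^'n) set" and x :: "real^'n"
  assume G: "finite_orth_group G" and irr: "acts_irreducibly G"
  have "finite G" "G \<noteq> {}" and orth: "\<And>U. U \<in> G \<Longrightarrow> orthogonal_matrix U"
    using G unfolding finite_orth_group_def by auto
  note orbit = prob_space.isotropic_schatten_bounds[OF prob_space_uniform_count_measure,
      of G "\<lambda>U. U *v x" "norm x" p T, OF \<open>finite G\<close> \<open>G \<noteq> {}\<close> _ _
      uniform_count_measure_orbit_isotropic[OF G irr] assms]
  have "AE U in uniform_count_measure G. norm (U *v x) = norm x"
    by (rule AE_I2) (simp add: space_uniform_count_measure orthogonal_matrix_norm orth)
  thus "(1 / real CARD('n) ^ p) * schatten_norm T 2 ^ (2 * p) * norm x ^ (2 * p)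
          \<le> (1 / real (card G)) * (\<Sum>U\<in>G. norm (T *v (U *v x)) ^ (2 * p))"
    and "(1 / real (card G)) * (\<Sum>U\<in>G. norm (T *v (U *v x)) ^ (2 * p))
          \<le> (1 / real CARD('n)) * schatten_norm T (2 * p) ^ (2 * p) * norm x ^ (2 * p)"
    using orbit \<open>finite G\<close>
    by (simp_all add: integral_uniform_count_measure
        measurable_cong_sets[OF sets_uniform_count_measure_count_space refl])
qed

end
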